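(* For every integer $n>0$, the rook equivalence graph $G(B)$ of the Ferrers board $B=(0,1,2,\ldots,n-1,n-1)$ (with $n+1$ columns of heights $0,1,\ldots,n-1$ followed by $n-1$) is isomorphic to the complete graph $K_n$.
   Context: A Ferrers board is given by a weakly increasing sequence of non-negative integers $B=(b_1,\ldots,b_n)$ of column heights; it is the set of unit cells in the first quadrant lying in column $i$ and rows $1,\ldots,b_i$. Prepending columns of height $0$ on the left does not change the board, and boards are compared using the same number of columns by such padding. A placement of $k$ rooks on $B$ is a set of $k$ cells of $B$ no two in the same row or column; $r_k(B)$ is the number of such placements. Two boards are rook equivalent if they have equal $r_k$ for all $k\ge 0$. The rook equivalence graph $G(B)$ has as vertices all Ferrers boards rook equivalent to $B$, and $\{B_1,B_2\}$ is an edge iff, written with the same number of columns, $B_1$ and $B_2$ differ in exactly two columns $i$ and $j$, where $B_1$ has $k$ more cells than $B_2$ in column $i$ and $k$ fewer cells than $B_2$ in column $j$, for some $k>0$. *)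

theory Defs
  imports Main
begin

definition ferrers :: "nat list \<Rightarrow> bool" where
  "ferrers B \<longleftrightarrow> sorted B"

definition cells :: "nat list \<Rightarrow> (nat \<times> nat) set" where
  "cells B = {(i, r). i < length B \<and> 1 \<le> r \<and> r \<le> B ! i}"

definition rook_placements :: "nat list \<Rightarrow> nat \<Rightarrow> (nat \<times> nat) set set" where
  "rook_placements B k =
     {S. S \<subseteq> cells B \<and> card S = k \<and> inj_on fst S \<and> inj_on snd S}"

definition rook_num :: "nat list \<Rightarrow> nat \<Rightarrow> nat" where
  "rook_num B k = card (rook_placements B k)"

definition rook_equiv :: "nat list \<Rightarrow> nat list \<Rightarrow> bool" where
  "rook_equiv B1 B2 \<longleftrightarrow> (\<forall>k. rook_num B1 k = rook_num B2 k)"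

text \<open>Prepending zero columns does not change the board; we identify a board
  with its canonical representative obtained by deleting leading zero columns.\<close>
definition canon :: "nat list \<Rightarrow> nat list" where
  "canon B = dropWhile (\<lambda>h. h = 0) B"

definition pad :: "nat \<Rightarrow> nat list \<Rightarrow> nat list" where
  "pad m B = replicate (m - length B) 0 @ B"

definition rook_adj :: "nat list \<Rightarrow> nat list \<Rightarrow> bool" where
  "rook_adj B1 B2 \<longleftrightarrow>
     (let m = max (length B1) (length B2); P1 = pad m B1; P2 = pad m B2 in
      \<exists>i j k. i < m \<and> j < m \<and> i \<noteq> j \<and> k > 0 \<and>
        P1 ! i = P2 ! i + k \<and> P1 ! j + k = P2 ! j \<and>
        (\<forall>l<m. l \<noteq> i \<longrightarrow> l \<noteq> j \<longrightarrow> P1 ! l = P2 ! l))"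

definition rook_graph_vertices :: "nat list \<Rightarrow> nat list set" where
  "rook_graph_vertices B = {canon C | C. ferrers C \<and> rook_equiv C B}"

definition rook_graph_iso_complete :: "nat list \<Rightarrow> nat \<Rightarrow> bool" where
  "rook_graph_iso_complete B n \<longleftrightarrow>
     (\<exists>f. bij_betw f (rook_graph_vertices B) {..<n} \<and>
        (\<forall>u \<in> rook_graph_vertices B. \<forall>v \<in> rook_graph_vertices B.
            rook_adj u v \<longleftrightarrow> f u \<noteq> f v))"

end

(*
  By the factorization theorem of Goldman, Joichi and White, a Ferrers board
  (b_0, ..., b_(m-1)) satisfies  sum_k r_k x(x-1)...(x-m+k+1) = prod_i (x + b_i - i),
  so rook equivalent boards with the same number of columns have the same multiset of
  offsets b_i - i. Padded with s zero columns, the board (0, 1, ..., n-1, n-1) has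
  offsets 0, -1, ..., -s, then -s repeated n - 1 times, then -s - 1. Offsets of a weakly
  increasing sequence drop by at most one per column, and this forces every Ferrers board
  with these offsets to be one of the n boards (0, 1, ..., t, t, t+2, ..., n), t < n,
  preceded by zeros. Conversely these boards are all rook equivalent, since replacing
  two columns of heights t, t+2 by t+1, t+1 does not change the rook numbers. Any two
  of them differ by moving one cell from one column to another, so G(B) is complete.
*)
theory Submission
  imports Defs "HOL-Computational_Algebra.Polynomial"
begin

section \<open>Rook numbers and zero columns\<close>

lemma cells_eq_Sigma: "cells L = (SIGMA i:{..<length L}. {1..L ! i})"
  unfolding cells_def by auto

lemma finite_cells [simp]: "finite (cells L)"
  unfolding cells_eq_Sigma by auto

lemma finite_rook_placements [simp]: "finite (rook_placements L k)"
  by (rule finite_subset[of _ "Pow (cells L)"]) (auto simp: rook_placements_def)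

lemma fst_in_cells_less: "c \<in> cells L \<Longrightarrow> fst c < length L"
  unfolding cells_def by auto

lemma rook_num_0 [simp]: "rook_num L 0 = 1"
proof -
  have "rook_placements L 0 = {{}}"
    unfolding rook_placements_def using finite_subset[OF _ finite_cells] by auto
  then show ?thesis by (simp add: rook_num_def)
qed

lemma rook_num_eq_0_if_length_less:
  assumes "length L < k"
  shows "rook_num L k = 0"
proof -
  have "rook_placements L k = {}"
  proof (rule ccontr)
    assume "rook_placements L k \<noteq> {}"
    then obtain S where S: "S \<subseteq> cells L" "card S = k" "inj_on fst S"
      unfolding rook_placements_def by auto
    have "card (fst ` S) \<le> card {..<length L}"
      using S(1) fst_in_cells_less by (intro card_mono) fastforce+
    moreover have "card (fst ` S) = k" using S card_image by metis
    ultimately show False using assms by simp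
  qed
  then show ?thesis by (simp add: rook_num_def)
qed

lemma rows_of_subset_cells:
  assumes "\<forall>h\<in>set L. h \<le> a" "S \<subseteq> cells L"
  shows "snd ` S \<subseteq> {1..a}"
  using assms unfolding cells_def by (force dest: nth_mem)

lemma rook_num_eq_0_if_height_less:
  assumes "\<forall>h\<in>set L. h \<le> a" "a < k"
  shows "rook_num L k = 0"
proof -
  have "rook_placements L k = {}"
  proof (rule ccontr)
    assume "rook_placements L k \<noteq> {}"
    then obtain S where S: "S \<subseteq> cells L" "card S = k" "inj_on snd S"
      unfolding rook_placements_def by auto
    have "card (snd ` S) \<le> card {1..a}"
      using rows_of_subset_cells[OF assms(1) S(1)] by (intro card_mono) auto
    moreover have "card (snd ` S) = k" using S card_image by metis
    ultimately show False using assms by simp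
  qed
  then show ?thesis by (simp add: rook_num_def)
qed

lemma cells_Cons_0: "cells (0 # L) = map_prod Suc id ` cells L"
  unfolding cells_def by (auto simp: image_iff less_Suc_eq_0_disj)

lemma rook_placements_Cons_0:
  "rook_placements (0 # L) k = (`) (map_prod Suc id) ` rook_placements L k"
proof -
  let ?f = "map_prod Suc id :: nat \<times> nat \<Rightarrow> nat \<times> nat"
  have inj: "inj ?f" by (auto simp: inj_def)
  have "inj_on fst (?f ` T) \<longleftrightarrow> inj_on fst T" "inj_on snd (?f ` T) \<longleftrightarrow> inj_on snd T" for T
    unfolding inj_on_def by fastforce+
  moreover have "card (?f ` T) = card T" for T
    using inj by (simp add: card_image inj_on_subset)
  ultimately show ?thesis
    unfolding rook_placements_def cells_Cons_0 by (auto simp: subset_image_iff image_iff)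
qed

lemma rook_num_Cons_0 [simp]: "rook_num (0 # L) k = rook_num L k"
proof -
  have "inj_on ((`) (map_prod Suc id :: nat \<times> nat \<Rightarrow> _)) X" for X
    by (rule inj_on_image) (auto simp: inj_on_def)
  then show ?thesis
    unfolding rook_num_def rook_placements_Cons_0 by (simp add: card_image)
qed

lemma rook_num_replicate_0_append [simp]: "rook_num (replicate m 0 @ L) k = rook_num L k"
  by (induction m) simp_all

lemma rook_num_pad [simp]: "rook_num (pad m L) k = rook_num L k"
  unfolding pad_def by simp

lemma length_pad: "length (pad m L) = max m (length L)"
  by (simp add: pad_def)

lemma pad_pad: "pad m' (pad m L) = pad (max m' m) L"
  by (simp add: pad_def replicate_add[symmetric])

lemma sorted_pad: "sorted L \<Longrightarrow> sorted (pad m L)"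
  by (simp add: pad_def sorted_append)

lemma canon_replicate_0_append: "canon (replicate m 0 @ L) = canon L"
  by (induction m) (simp_all add: canon_def)

lemma canon_pad: "canon (pad m L) = canon L"
  by (simp add: pad_def canon_replicate_0_append)

lemma pad_length_canon: "pad (length L) (canon L) = L"
  by (induction L) (auto simp: pad_def canon_def Suc_diff_le length_dropWhile_le)

section \<open>Adding a column\<close>

lemma cells_snoc: "cells (L @ [a]) = cells L \<union> {length L} \<times> {1..a}"
  unfolding cells_def by (auto simp: nth_append less_Suc_eq)

lemma rook_placements_snoc_avoiding_last:
  "{S \<in> rook_placements (L @ [a]) k. length L \<notin> fst ` S} = rook_placements L k"
proof -
  have "S \<subseteq> cells L \<union> {length L} \<times> {1..a} \<and> length L \<notin> fst ` S \<longleftrightarrow> S \<subseteq> cells L" for S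
  proof
    assume S: "S \<subseteq> cells L \<union> {length L} \<times> {1..a} \<and> length L \<notin> fst ` S"
    show "S \<subseteq> cells L"
    proof
      fix c assume "c \<in> S"
      then have "c \<in> cells L \<union> {length L} \<times> {1..a}" "fst c \<noteq> length L" using S by force+
      then show "c \<in> cells L" by auto
    qed
  next
    assume "S \<subseteq> cells L"
    then show "S \<subseteq> cells L \<union> {length L} \<times> {1..a} \<and> length L \<notin> fst ` S"
      using fst_in_cells_less by fastforce
  qed
  then show ?thesis unfolding rook_placements_def cells_snoc by auto
qed

lemma remove_rook_from_last_column:
  assumes "S \<in> rook_placements (L @ [a]) (Suc k)" "(length L, r) \<in> S"
  shows "S - {(length L, r)} \<in> rook_placements L k" "r \<in> {1..a} - snd ` (S - {(length L, r)})"
proof -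
  let ?P = "S - {(length L, r)}"
  have S: "S \<subseteq> cells L \<union> {length L} \<times> {1..a}" "card S = Suc k" "inj_on fst S" "inj_on snd S"
    using assms(1) unfolding rook_placements_def cells_snoc by auto
  have P_not_last: "length L \<notin> fst ` ?P" using inj_onD[OF S(3) _ _ assms(2)] by fastforce
  have "?P \<subseteq> cells L"
  proof
    fix c assume "c \<in> ?P"
    then have "c \<in> S" "fst c \<noteq> length L" using P_not_last by force+
    then show "c \<in> cells L" using S(1) by auto
  qed
  moreover have "card ?P = k" using S(2) assms(2) finite_subset[OF S(1)] by simp
  moreover have "inj_on fst ?P" "inj_on snd ?P" using S(3,4) by (auto intro: inj_on_subset)
  ultimately show "?P \<in> rook_placements L k" unfolding rook_placements_def by blast
  have "(length L, r) \<notin> cells L" using fst_in_cells_less by fastforce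
  then have "r \<in> {1..a}" using S(1) assms(2) by blast
  moreover have "r \<notin> snd ` ?P" using inj_onD[OF S(4) _ _ assms(2)] by fastforce
  ultimately show "r \<in> {1..a} - snd ` ?P" by blast
qed

lemma insert_rook_into_last_column:
  assumes "P \<in> rook_placements L k" "r \<in> {1..a} - snd ` P"
  shows "insert (length L, r) P \<in> rook_placements (L @ [a]) (Suc k)"
proof -
  have P: "P \<subseteq> cells L" "card P = k" "inj_on fst P" "inj_on snd P"
    using assms(1) unfolding rook_placements_def by auto
  have not_last: "length L \<notin> fst ` P" using P(1) fst_in_cells_less by fastforce
  then have "(length L, r) \<notin> P" by force
  then have P_minus: "P - {(length L, r)} = P" by simp
  let ?S = "insert (length L, r) P"
  have "?S \<subseteq> cells (L @ [a])" unfolding cells_snoc using P(1) assms(2) by blast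
  moreover have "card ?S = Suc k"
    using finite_subset[OF P(1) finite_cells] \<open>(length L, r) \<notin> P\<close> P(2) by simp
  moreover have "inj_on fst ?S" "inj_on snd ?S"
    using P(3,4) assms(2) not_last by (simp_all add: P_minus)
  ultimately show ?thesis unfolding rook_placements_def by simp
qed

lemma rook_placements_snoc_using_last:
  "{S \<in> rook_placements (L @ [a]) (Suc k). length L \<in> fst ` S} =
     (\<lambda>(P, r). insert (length L, r) P) ` (SIGMA P:rook_placements L k. {1..a} - snd ` P)"
  (is "?A = ?B")
proof
  show "?A \<subseteq> ?B"
  proof
    fix S assume "S \<in> ?A"
    then obtain r where S: "S \<in> rook_placements (L @ [a]) (Suc k)" and r: "(length L, r) \<in> S"
      by force
    have "S = insert (length L, r) (S - {(length L, r)})" using r by blast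
    with remove_rook_from_last_column[OF S r] show "S \<in> ?B"
      by (intro image_eqI[where x = "(S - {(length L, r)}, r)"]) simp_all
  qed
next
  show "?B \<subseteq> ?A"
  proof (rule image_subsetI)
    fix x assume "x \<in> (SIGMA P:rook_placements L k. {1..a} - snd ` P)"
    then obtain P r where "x = (P, r)" "P \<in> rook_placements L k" "r \<in> {1..a} - snd ` P" by blast
    then show "(\<lambda>(P, r). insert (length L, r) P) x \<in> ?A"
      using insert_rook_into_last_column[of P L k r a] by simp
  qed
qed

lemma inj_on_insert_last_rook:
  "inj_on (\<lambda>(P, r). insert (length L, r) P) (SIGMA P:rook_placements L k. X P)"
proof (rule inj_onI, clarify)
  fix P r Q t
  assume "P \<in> rook_placements L k" "Q \<in> rook_placements L k"
    and eq: "insert (length L, r) P = insert (length L, t) Q"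
  then have "length L \<notin> fst ` P" "length L \<notin> fst ` Q"
    unfolding rook_placements_def using fst_in_cells_less by force+
  then have "(length L, r) \<notin> P" "(length L, t) \<notin> Q" by force+
  have "(length L, r) \<in> insert (length L, t) Q" using eq by blast
  then have "r = t" using \<open>(length L, t) \<notin> Q\<close> \<open>length L \<notin> fst ` Q\<close> by force
  with eq \<open>(length L, r) \<notin> P\<close> \<open>(length L, t) \<notin> Q\<close> show "P = Q \<and> r = t"
    by (simp add: insert_ident)
qed

lemma card_Sigma_free_rows:
  assumes "\<forall>h\<in>set L. h \<le> a"
  shows "card (SIGMA P:rook_placements L k. {1..a} - snd ` P) = (a - k) * rook_num L k"
proof -
  have fibre: "card ({1..a} - snd ` P) = a - k" if "P \<in> rook_placements L k" for P
  proof -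
    have P: "P \<subseteq> cells L" "card P = k" "inj_on snd P"
      using that unfolding rook_placements_def by auto
    then have "card (snd ` P) = k" using card_image by metis
    with rows_of_subset_cells[OF assms P(1)] show ?thesis
      by (simp add: card_Diff_subset finite_subset[OF P(1)])
  qed
  then have "card (SIGMA P:rook_placements L k. {1..a} - snd ` P) = (\<Sum>P\<in>rook_placements L k. a - k)"
    by (subst card_SigmaI) (auto intro: sum.cong fibre)
  then show ?thesis by (simp add: rook_num_def)
qed

lemma rook_num_snoc:
  assumes "\<forall>h\<in>set L. h \<le> a"
  shows "rook_num (L @ [a]) (Suc k) = rook_num L (Suc k) + (a - k) * rook_num L k"
proof -
  let ?R = "rook_placements (L @ [a]) (Suc k)"
  have "?R = {S \<in> ?R. length L \<notin> fst ` S} \<union> {S \<in> ?R. length L \<in> fst ` S}" by blast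
  then have "rook_num (L @ [a]) (Suc k) =
      card {S \<in> ?R. length L \<notin> fst ` S} + card {S \<in> ?R. length L \<in> fst ` S}"
    unfolding rook_num_def by (subst card_Un_disjoint[symmetric]) auto
  also have "\<dots> = rook_num L (Suc k) + (a - k) * rook_num L k"
    unfolding rook_placements_snoc_avoiding_last rook_placements_snoc_using_last
      card_image[OF inj_on_insert_last_rook] card_Sigma_free_rows[OF assms] rook_num_def ..
  finally show ?thesis .
qed

lemma of_nat_rook_num_snoc:
  assumes "\<forall>h\<in>set L. h \<le> a"
  shows "(of_nat (rook_num (L @ [a]) (Suc k)) :: 'a :: comm_ring_1) =
    of_nat (rook_num L (Suc k)) + (of_nat a - of_nat k) * of_nat (rook_num L k)"
  using rook_num_snoc[OF assms, of k] rook_num_eq_0_if_height_less[OF assms, of k]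
  by (cases "k \<le> a") (simp_all add: of_nat_diff)

lemma rook_equiv_trans: "rook_equiv L1 L2 \<Longrightarrow> rook_equiv L2 L3 \<Longrightarrow> rook_equiv L1 L3"
  by (simp add: rook_equiv_def)

lemma rook_equiv_snoc:
  assumes "rook_equiv A A'" "\<forall>h\<in>set A. h \<le> a" "\<forall>h\<in>set A'. h \<le> a"
  shows "rook_equiv (A @ [a]) (A' @ [a])"
  unfolding rook_equiv_def
proof
  fix k
  show "rook_num (A @ [a]) k = rook_num (A' @ [a]) k"
    using assms rook_num_snoc[OF assms(2)] rook_num_snoc[OF assms(3)]
    by (cases k) (simp_all add: rook_equiv_def)
qed

lemma rook_equiv_append:
  assumes "rook_equiv A A'" "sorted E"
    "\<forall>h\<in>set A. \<forall>e\<in>set E. h \<le> e" "\<forall>h\<in>set A'. \<forall>e\<in>set E. h \<le> e"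
  shows "rook_equiv (A @ E) (A' @ E)"
  using assms(2-)
proof (induction E rule: rev_induct)
  case Nil
  then show ?case using assms(1) by simp
next
  case (snoc e E)
  then have "rook_equiv (A @ E) (A' @ E)" by (simp add: sorted_append)
  moreover have "\<forall>h\<in>set (A @ E). h \<le> e" "\<forall>h\<in>set (A' @ E). h \<le> e"
    using snoc.prems by (auto simp: sorted_append)
  ultimately show ?case using rook_equiv_snoc by fastforce
qed

lemma of_nat_rook_num_snoc2:
  assumes "\<forall>h\<in>set A. h \<le> x" "x \<le> y"
  shows "(of_nat (rook_num (A @ [x, y]) (Suc (Suc k))) :: 'a :: comm_ring_1) =
    of_nat (rook_num A (Suc (Suc k)))
    + (of_nat x + of_nat y - 2 * of_nat k - 2) * of_nat (rook_num A (Suc k))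
    + (of_nat x - of_nat k) * (of_nat y - of_nat k - 1) * of_nat (rook_num A k)"
proof -
  have le: "\<forall>h\<in>set (A @ [x]). h \<le> y" using assms by auto
  have split: "A @ [x, y] = (A @ [x]) @ [y]" by simp
  show ?thesis
    unfolding split of_nat_rook_num_snoc[OF le] of_nat_rook_num_snoc[OF assms(1)]
    by (simp add: algebra_simps)
qed

text \<open>The right-hand side of of_nat_rook_num_snoc2 is symmetric in x and y - 1, and
  the two boards below differ by exchanging these two values.\<close>

lemma rook_equiv_swap:
  assumes "\<forall>h\<in>set A. h \<le> t"
  shows "rook_equiv (A @ [t, t + 2]) (A @ [t + 1, t + 1])"
proof -
  have le: "\<forall>h\<in>set A. h \<le> t + 1" "\<forall>h\<in>set (A @ [t]). h \<le> t + 2"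
    "\<forall>h\<in>set (A @ [t + 1]). h \<le> t + 1"
    using assms by auto
  note rec = of_nat_rook_num_snoc[where 'a = int] and rec2 = of_nat_rook_num_snoc2[where 'a = int]
  have "int (rook_num (A @ [t, t + 2]) k) = int (rook_num (A @ [t + 1, t + 1]) k)" for k
  proof -
    consider "k = 0" | "k = 1" | i where "k = Suc (Suc i)"
      by (metis One_nat_def not0_implies_Suc)
    then show ?thesis
    proof cases
      case 1
      then show ?thesis by simp
    next
      case 2
      then show ?thesis
        using rec[OF le(2), of 0] rec[OF le(3), of 0] rec[OF assms, of 0] rec[OF le(1), of 0] by simp
    next
      case 3
      then show ?thesis
        using rec2[OF assms, of "t + 2" i] rec2[OF le(1), of "t + 1" i] by (simp add: algebra_simps)
    qed
  qed
  then show ?thesis by (simp add: rook_equiv_def)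
qed

section \<open>The factorization theorem\<close>

definition falling_factorial :: "'a :: comm_ring_1 \<Rightarrow> nat \<Rightarrow> 'a" where
  "falling_factorial x j = (\<Prod>i<j. x - of_nat i)"

lemma falling_factorial_Suc: "falling_factorial x (Suc j) = falling_factorial x j * (x - of_nat j)"
  by (simp add: falling_factorial_def)

definition rook_poly :: "nat list \<Rightarrow> 'a :: comm_ring_1 \<Rightarrow> 'a" where
  "rook_poly L x = (\<Sum>k\<le>length L. of_nat (rook_num L k) * falling_factorial x (length L - k))"

definition offset :: "nat list \<Rightarrow> nat \<Rightarrow> int" where
  "offset L i = int (L ! i) - int i"

lemma offset_append: "i < length L \<Longrightarrow> offset (L @ E) i = offset L i"
  by (simp add: offset_def nth_append)

lemma rook_poly_snoc:
  assumes "\<forall>h\<in>set L. h \<le> a"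
  shows "rook_poly (L @ [a]) x = rook_poly L x * (x + of_nat a - of_nat (length L))"
proof -
  define m where "m = length L"
  let ?r = "\<lambda>k. of_nat (rook_num L k) :: 'a" and ?ff = "falling_factorial x"
  have shift: "?r 0 * ?ff (Suc m) + (\<Sum>k\<le>m. ?r (Suc k) * ?ff (m - k))
      = (\<Sum>k\<le>m. ?r k * ?ff (m - k) * (x - of_nat m + of_nat k))"
  proof -
    have "?r 0 * ?ff (Suc m) + (\<Sum>k\<le>m. ?r (Suc k) * ?ff (m - k)) = (\<Sum>k\<le>Suc m. ?r k * ?ff (Suc m - k))"
      by (subst sum.atMost_Suc_shift) simp
    also have "\<dots> = (\<Sum>k\<le>m. ?r k * ?ff (Suc m - k))"
      by (simp add: m_def rook_num_eq_0_if_length_less)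
    also have "\<dots> = (\<Sum>k\<le>m. ?r k * ?ff (m - k) * (x - of_nat m + of_nat k))"
      by (intro sum.cong) (auto simp: Suc_diff_le falling_factorial_Suc of_nat_diff algebra_simps)
    finally show ?thesis .
  qed
  have "rook_poly (L @ [a]) x
      = ?r 0 * ?ff (Suc m) + (\<Sum>k\<le>m. of_nat (rook_num (L @ [a]) (Suc k)) * ?ff (m - k))"
    unfolding rook_poly_def m_def length_append_singleton sum.atMost_Suc_shift by simp
  also have "\<dots> = (?r 0 * ?ff (Suc m) + (\<Sum>k\<le>m. ?r (Suc k) * ?ff (m - k)))
      + (\<Sum>k\<le>m. (of_nat a - of_nat k) * ?r k * ?ff (m - k))"
    unfolding of_nat_rook_num_snoc[OF assms] by (simp add: distrib_right sum.distrib add.assoc)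
  also have "\<dots> = rook_poly L x * (x + of_nat a - of_nat m)"
    unfolding shift rook_poly_def m_def[symmetric] sum.distrib[symmetric] sum_distrib_right
    by (rule sum.cong) (simp_all add: algebra_simps)
  finally show ?thesis by (simp add: m_def)
qed

theorem rook_poly_factorization:
  assumes "sorted L"
  shows "rook_poly L x = (\<Prod>i<length L. x + of_int (offset L i))"
  using assms
proof (induction L rule: rev_induct)
  case Nil
  then show ?case by (simp add: rook_poly_def falling_factorial_def)
next
  case (snoc a L)
  have prefix: "(\<Prod>i<length L. x + of_int (offset L i)) = (\<Prod>i<length L. x + of_int (offset (L @ [a]) i))"
    by (rule prod.cong) (simp_all add: offset_append)
  have "rook_poly (L @ [a]) x = (\<Prod>i<length L. x + of_int (offset L i)) * (x + of_nat a - of_nat (length L))"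
    using snoc by (simp add: rook_poly_snoc sorted_append)
  also have "\<dots> = (\<Prod>i<Suc (length L). x + of_int (offset (L @ [a]) i))"
    unfolding prefix by (simp add: offset_def algebra_simps)
  finally show ?case by simp
qed

lemma order_linear_factor: "order a [:c, 1 :: 'a :: idom:] = (if c = - a then 1 else 0)"
proof (cases "c = - a")
  case True
  then show ?thesis using order_power_n_n[of a 1] by simp
next
  case False
  then have "poly [:c, 1:] a \<noteq> 0" using eq_neg_iff_add_eq_0[of c a] by simp
  then show ?thesis using False by (simp add: order_0I)
qed

lemma order_prod_linear_factors:
  fixes c :: "'b \<Rightarrow> 'a :: idom"
  assumes "finite I"
  shows "order a (\<Prod>i\<in>I. [:c i, 1:]) = card {i\<in>I. c i = - a}"
  using assms
proof (induction I rule: finite_induct)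
  case empty
  then show ?case by (simp add: order_0I)
next
  case (insert j I)
  have "(\<Prod>i\<in>insert j I. [:c i, 1:]) \<noteq> 0" using insert.hyps by (subst prod_zero_iff) auto
  then have "order a (\<Prod>i\<in>insert j I. [:c i, 1:]) = order a [:c j, 1:] + order a (\<Prod>i\<in>I. [:c i, 1:])"
    unfolding prod.insert[OF insert.hyps] by (rule order_mult)
  also have "\<dots> = card {i\<in>insert j I. c i = - a}"
  proof (cases "c j = - a")
    case True
    then have "{i\<in>insert j I. c i = - a} = insert j {i\<in>I. c i = - a}" by auto
    then show ?thesis using True insert by (simp add: order_linear_factor)
  next
    case False
    then have "{i\<in>insert j I. c i = - a} = {i\<in>I. c i = - a}" by auto
    then show ?thesis using False insert by (simp add: order_linear_factor)
  qed
  finally show ?case .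
qed

text \<open>Evaluated at the indeterminate, the factorization is an identity of polynomials whose
  root multiplicities count the columns of each offset.\<close>

lemma rook_equiv_offset_count_eq:
  assumes "sorted L1" "sorted L2" "length L1 = length L2" "rook_equiv L1 L2"
  shows "card {i. i < length L1 \<and> offset L1 i = v} = card {i. i < length L2 \<and> offset L2 i = v}"
proof -
  have "order (- v) (rook_poly L [:0, 1:]) = card {i. i < length L \<and> offset L i = v}"
    if "sorted L" for L
  proof -
    have "rook_poly L [:0, 1:] = (\<Prod>i<length L. [:0, 1:] + of_int (offset L i))"
      by (rule rook_poly_factorization[OF that])
    also have "\<dots> = (\<Prod>i<length L. [:offset L i, 1:])"
      by (simp add: of_int_poly)
    finally show ?thesis by (simp add: order_prod_linear_factors Collect_conj_eq lessThan_def)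
  qed
  moreover have "rook_poly L1 (x :: int poly) = rook_poly L2 x" for x
    using assms(3,4) by (simp add: rook_poly_def rook_equiv_def)
  ultimately show ?thesis using assms(1,2) by metis
qed

section \<open>Boards rook equivalent to a lowered staircase\<close>

definition lowered_staircase :: "nat \<Rightarrow> nat \<Rightarrow> nat list" where
  "lowered_staircase n t = [0..<Suc n][Suc t := t]"

lemma length_lowered_staircase [simp]: "length (lowered_staircase n t) = Suc n"
  by (simp add: lowered_staircase_def)

lemma nth_lowered_staircase:
  "i \<le> n \<Longrightarrow> lowered_staircase n t ! i = (if i = Suc t then t else i)"
  by (simp add: lowered_staircase_def nth_list_update del: upt_Suc)

lemma lowered_staircase_eq_append:
  assumes "t < n"
  shows "lowered_staircase n t = [0..<Suc t] @ t # [Suc (Suc t)..<Suc n]"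
proof (rule nth_equalityI)
  fix i assume "i < length (lowered_staircase n t)"
  then show "lowered_staircase n t ! i = ([0..<Suc t] @ t # [Suc (Suc t)..<Suc n]) ! i"
    using assms by (auto simp: nth_lowered_staircase nth_append nth_Cons' simp del: upt_Suc)
qed (use assms in auto)

lemma lowered_staircase_last: "0 < n \<Longrightarrow> lowered_staircase n (n - 1) = [0..<n] @ [n - 1]"
  by (simp add: lowered_staircase_eq_append)

lemma sorted_lowered_staircase: "t < n \<Longrightarrow> sorted (lowered_staircase n t)"
  by (auto simp: lowered_staircase_eq_append sorted_append simp del: upt_Suc)

lemma rook_equiv_lowered_staircase_Suc:
  assumes "Suc t < n"
  shows "rook_equiv (lowered_staircase n t) (lowered_staircase n (Suc t))"
proof -
  let ?head = "[0..<Suc t]" and ?tail = "[Suc (Suc (Suc t))..<Suc n]"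
  have "lowered_staircase n t = (?head @ [t, Suc (Suc t)]) @ ?tail"
    using assms upt_conv_Cons[of "Suc (Suc t)" "Suc n"]
    by (simp add: lowered_staircase_eq_append del: upt_Suc)
  moreover have "lowered_staircase n (Suc t) = (?head @ [Suc t, Suc t]) @ ?tail"
    using assms by (simp add: lowered_staircase_eq_append)
  moreover have "rook_equiv (?head @ [t, t + 2]) (?head @ [t + 1, t + 1])"
    by (rule rook_equiv_swap) auto
  then have "rook_equiv ((?head @ [t, t + 2]) @ ?tail) ((?head @ [t + 1, t + 1]) @ ?tail)"
    by (rule rook_equiv_append) (auto simp del: upt_Suc)
  ultimately show ?thesis by simp
qed

lemma rook_equiv_lowered_staircase:
  assumes "t < n"
  shows "rook_equiv (lowered_staircase n t) (lowered_staircase n (n - 1))"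
proof -
  from assms have "t \<le> n - 1" by simp
  then show ?thesis
  proof (induction t rule: inc_induct)
    case (step t)
    then have "Suc t < n" by simp
    with step.IH show ?case by (blast intro: rook_equiv_trans rook_equiv_lowered_staircase_Suc)
  qed (simp add: rook_equiv_def)
qed

definition dip_offset :: "nat \<Rightarrow> nat \<Rightarrow> nat \<Rightarrow> int" where
  "dip_offset s j i = (if i \<le> s then - int i else if i = j then - int s - 1 else - int s)"

lemma dip_offset_level_set:
  assumes "- int s < v" "v \<le> 0" "s < m"
  shows "{i. i < m \<and> dip_offset s j i = v} = {nat (- v)}"
  using assms by (auto simp: dip_offset_def)

lemma dip_offset_bottom_level_set:
  assumes "s < j" "j < m"
  shows "{i. i < m \<and> dip_offset s j i = - int s - 1} = {j}"
  using assms by (auto simp: dip_offset_def)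

text \<open>In the locale below d is the offset sequence of a Ferrers board: it starts nonnegative
  and drops by at most one per step. Walking down from d 0 it has to meet 0, -1, ..., -s in
  turn, and each of these values except -s is taken only once; this pins d down on the
  first s + 1 positions, and after them only -s and the single value -s - 1 remain.\<close>

locale dip_profile =
  fixes s j0 m :: nat and d :: "nat \<Rightarrow> int"
  assumes j0: "s < j0" "j0 < m"
    and start: "0 \<le> d 0"
    and step: "\<And>i. Suc i < m \<Longrightarrow> d i - 1 \<le> d (Suc i)"
    and levels: "\<And>v. card {i. i < m \<and> d i = v} = card {i. i < m \<and> dip_offset s j0 i = v}"
begin

lemma bounded: "i < m \<Longrightarrow> - int s - 1 \<le> d i \<and> d i \<le> 0"
proof (rule ccontr)
  assume "i < m" "\<not> (- int s - 1 \<le> d i \<and> d i \<le> 0)"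
  then have "{k. k < m \<and> dip_offset s j0 k = d i} = {}" by (auto simp: dip_offset_def)
  then have "card {k. k < m \<and> d k = d i} = 0" using levels[of "d i"] by (simp only: card.empty)
  moreover have "i \<in> {k. k < m \<and> d k = d i}" using \<open>i < m\<close> by simp
  ultimately show False by (metis card_0_eq empty_iff finite_Collect_conjI finite_Collect_less_nat)
qed

lemma unique_level:
  assumes "i1 < m" "i2 < m" "d i1 = d i2" "- int s < d i1 \<or> d i1 = - int s - 1"
  shows "i1 = i2"
proof -
  from assms(4) have "card {k. k < m \<and> dip_offset s j0 k = d i1} = 1"
  proof
    assume "- int s < d i1"
    then show ?thesis using dip_offset_level_set[of s "d i1" m j0] bounded[OF assms(1)] j0 by simp
  next
    assume "d i1 = - int s - 1"
    then show ?thesis using dip_offset_bottom_level_set[OF j0] by simp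
  qed
  then have "card {k. k < m \<and> d k = d i1} = 1" by (simp only: levels)
  then obtain x where x: "{k. k < m \<and> d k = d i1} = {x}" by (rule card_1_singletonE)
  have "i1 \<in> {k. k < m \<and> d k = d i1}" "i2 \<in> {k. k < m \<and> d k = d i1}" using assms(1-3) by simp_all
  then show ?thesis unfolding x by simp
qed

lemma eq_on_prefix: "i \<le> s \<Longrightarrow> d i = - int i"
proof (induction i rule: less_induct)
  case (less i)
  have "i < m" "d i \<le> 0" using less.prems j0 bounded[of i] by simp_all
  show ?case
  proof (cases i)
    case 0
    then show ?thesis using start \<open>d i \<le> 0\<close> by simp
  next
    case (Suc i')
    then have "d i' = - int i'" using less by simp
    then have ge: "- int i \<le> d i" using step[of i'] Suc \<open>i < m\<close> by simp
    have "\<not> - int i < d i"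
    proof
      assume "- int i < d i"
      define k where "k = nat (- d i)"
      have "int k = - d i" unfolding k_def using \<open>d i \<le> 0\<close> by simp
      then have "k < i" using \<open>- int i < d i\<close> by linarith
      then have "d k = d i" using less.IH[of k] less.prems \<open>int k = - d i\<close> by simp
      moreover have "- int s < d i" using \<open>- int i < d i\<close> less.prems by linarith
      ultimately have "k = i" using unique_level[of k i] \<open>k < i\<close> \<open>i < m\<close> by simp
      then show False using \<open>k < i\<close> by simp
    qed
    then show ?thesis using ge by simp
  qed
qed

lemma values_after_prefix:
  assumes "s < i" "i < m"
  shows "d i = - int s \<or> d i = - int s - 1"
proof (rule ccontr)
  assume "\<not> ?thesis"
  then have "- int s < d i" using bounded[OF assms(2)] by simp
  define k where "k = nat (- d i)"
  have "int k = - d i" unfolding k_def using bounded[OF assms(2)] by simp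
  then have "k < s" using \<open>- int s < d i\<close> by linarith
  then have "d k = d i" using eq_on_prefix[of k] \<open>int k = - d i\<close> by simp
  then have "k = i" using unique_level[of k i] \<open>k < s\<close> \<open>- int s < d i\<close> assms by simp
  then show False using \<open>k < s\<close> assms(1) by simp
qed

lemma eq_dip_offset:
  obtains j where "s < j" "j < m" "\<And>i. i < m \<Longrightarrow> d i = dip_offset s j i"
proof -
  obtain j where j: "{k. k < m \<and> d k = - int s - 1} = {j}"
    using levels[of "- int s - 1"] j0 by (auto simp: dip_offset_bottom_level_set card_1_singleton_iff)
  have "j \<in> {k. k < m \<and> d k = - int s - 1}" unfolding j by simp
  then have "j < m" "d j = - int s - 1" by simp_all
  then have "s < j" using eq_on_prefix[of j] by (cases "j \<le> s") simp_all
  moreover note \<open>j < m\<close>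
  moreover have "d i = dip_offset s j i" if "i < m" for i
  proof (cases "i \<le> s")
    case True
    then show ?thesis using eq_on_prefix by (simp add: dip_offset_def)
  next
    case False
    have "i \<in> {k. k < m \<and> d k = - int s - 1} \<longleftrightarrow> i \<in> {j}" by (simp only: j)
    then show ?thesis using values_after_prefix[of i] False that by (auto simp: dip_offset_def)
  qed
  ultimately show ?thesis by (rule that)
qed

end

lemma offset_padded_lowered_staircase:
  assumes "i \<le> s + n"
  shows "offset (replicate s 0 @ lowered_staircase n t) i = dip_offset s (s + Suc t) i"
  using assms by (auto simp: offset_def dip_offset_def nth_append nth_lowered_staircase)

lemma eq_padded_lowered_staircase_if_rook_equiv:
  assumes "0 < n" "sorted C" "length C = s + Suc n"
    and "rook_equiv C (replicate s 0 @ lowered_staircase n (n - 1))"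
  obtains t where "t < n" "C = replicate s 0 @ lowered_staircase n t"
proof -
  let ?m = "s + Suc n" and ?B = "replicate s 0 @ lowered_staircase n (n - 1)"
  have "sorted ?B"
    using sorted_lowered_staircase[of "n - 1" n] assms(1) by (simp add: sorted_append)
  then have "card {i. i < ?m \<and> offset C i = v} = card {i. i < ?m \<and> offset ?B i = v}" for v
    using rook_equiv_offset_count_eq[OF assms(2) _ _ assms(4)] assms(3) by simp
  also have "{i. i < ?m \<and> offset ?B i = v} = {i. i < ?m \<and> dip_offset s (s + n) i = v}" for v
    using offset_padded_lowered_staircase[of _ s n "n - 1"] assms(1) by auto
  finally have levels: "card {i. i < ?m \<and> offset C i = v} = card {i. i < ?m \<and> dip_offset s (s + n) i = v}"
    for v .
  have step: "offset C i - 1 \<le> offset C (Suc i)" if "Suc i < ?m" for i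
  proof -
    have "C ! i \<le> C ! Suc i" using assms(2,3) that by (simp add: sorted_iff_nth_mono)
    then show ?thesis by (simp add: offset_def)
  qed
  interpret dip_profile s "s + n" ?m "offset C"
    using assms(1) step levels by unfold_locales (simp_all add: offset_def)
  obtain j where j: "s < j" "j < ?m" "\<And>i. i < ?m \<Longrightarrow> offset C i = dip_offset s j i"
    using eq_dip_offset by blast
  define t where "t = j - Suc s"
  have "j = s + Suc t" using j unfolding t_def by simp
  have "t < n" using j unfolding t_def by simp
  moreover have "C = replicate s 0 @ lowered_staircase n t"
  proof (rule nth_equalityI)
    fix i assume "i < length C"
    then have "offset C i = offset (replicate s 0 @ lowered_staircase n t) i"
      using j(3) offset_padded_lowered_staircase[of i s n t] assms(3) \<open>j = s + Suc t\<close> by simp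
    then show "C ! i = (replicate s 0 @ lowered_staircase n t) ! i" by (simp add: offset_def)
  qed (simp add: assms(3))
  ultimately show ?thesis by (rule that)
qed

lemma rook_graph_vertices_lowered_staircase:
  assumes "0 < n"
  shows "rook_graph_vertices (lowered_staircase n (n - 1)) = (\<lambda>t. canon (lowered_staircase n t)) ` {..<n}"
proof
  show "rook_graph_vertices (lowered_staircase n (n - 1)) \<subseteq> (\<lambda>t. canon (lowered_staircase n t)) ` {..<n}"
  proof
    fix u assume "u \<in> rook_graph_vertices (lowered_staircase n (n - 1))"
    then obtain C where C: "u = canon C" "sorted C" "rook_equiv C (lowered_staircase n (n - 1))"
      unfolding rook_graph_vertices_def ferrers_def by blast
    define s where "s = max (length C) (Suc n) - Suc n"
    have "length (pad (s + Suc n) C) = s + Suc n" unfolding s_def by (simp add: length_pad)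
    moreover have "rook_equiv (pad (s + Suc n) C) (replicate s 0 @ lowered_staircase n (n - 1))"
      using C(3) by (simp add: rook_equiv_def)
    ultimately obtain t where "t < n" and padded: "pad (s + Suc n) C = replicate s 0 @ lowered_staircase n t"
      by (rule eq_padded_lowered_staircase_if_rook_equiv[OF assms sorted_pad[OF C(2)]])
    have "u = canon (pad (s + Suc n) C)" by (simp add: C(1) canon_pad)
    also have "\<dots> = canon (lowered_staircase n t)" unfolding padded canon_replicate_0_append ..
    finally show "u \<in> (\<lambda>t. canon (lowered_staircase n t)) ` {..<n}" using \<open>t < n\<close> by simp
  qed
next
  show "(\<lambda>t. canon (lowered_staircase n t)) ` {..<n} \<subseteq> rook_graph_vertices (lowered_staircase n (n - 1))"
  proof (rule image_subsetI)
    fix t assume "t \<in> {..<n}"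
    then have "t < n" by simp
    then have "sorted (lowered_staircase n t)" "rook_equiv (lowered_staircase n t) (lowered_staircase n (n - 1))"
      by (rule sorted_lowered_staircase, rule rook_equiv_lowered_staircase)
    then show "canon (lowered_staircase n t) \<in> rook_graph_vertices (lowered_staircase n (n - 1))"
      unfolding rook_graph_vertices_def ferrers_def by blast
  qed
qed

section \<open>Adjacency\<close>

definition transfer_adjacent :: "nat list \<Rightarrow> nat list \<Rightarrow> bool" where
  "transfer_adjacent P1 P2 \<longleftrightarrow> length P1 = length P2 \<and>
     (\<exists>i j k. i < length P1 \<and> j < length P1 \<and> i \<noteq> j \<and> k > 0 \<and>
        P1 ! i = P2 ! i + k \<and> P1 ! j + k = P2 ! j \<and>
        (\<forall>l<length P1. l \<noteq> i \<longrightarrow> l \<noteq> j \<longrightarrow> P1 ! l = P2 ! l))"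

lemma rook_adj_iff_transfer_adjacent:
  "rook_adj B1 B2 \<longleftrightarrow>
     transfer_adjacent (pad (max (length B1) (length B2)) B1) (pad (max (length B1) (length B2)) B2)"
  unfolding rook_adj_def transfer_adjacent_def Let_def by (simp add: length_pad)

lemma transfer_adjacent_Cons: "transfer_adjacent (c # P1) (c # P2) \<longleftrightarrow> transfer_adjacent P1 P2"
proof
  assume "transfer_adjacent (c # P1) (c # P2)"
  then obtain i j k where ijk: "i < Suc (length P1)" "j < Suc (length P1)" "i \<noteq> j" "k > 0"
      "(c # P1) ! i = (c # P2) ! i + k" "(c # P1) ! j + k = (c # P2) ! j"
      "\<forall>l<Suc (length P1). l \<noteq> i \<longrightarrow> l \<noteq> j \<longrightarrow> (c # P1) ! l = (c # P2) ! l"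
      and "length P1 = length P2"
    unfolding transfer_adjacent_def by auto
  then obtain i' j' where "i = Suc i'" "j = Suc j'"
    by (cases i; cases j) auto
  with ijk \<open>length P1 = length P2\<close> show "transfer_adjacent P1 P2"
    unfolding transfer_adjacent_def
    by (intro conjI exI[of _ i'] exI[of _ j'] exI[of _ k]) (auto dest: spec[of _ "Suc _"])
next
  assume "transfer_adjacent P1 P2"
  then obtain i j k where ijk: "i < length P1" "j < length P1" "i \<noteq> j" "k > 0"
      "P1 ! i = P2 ! i + k" "P1 ! j + k = P2 ! j"
      "\<forall>l<length P1. l \<noteq> i \<longrightarrow> l \<noteq> j \<longrightarrow> P1 ! l = P2 ! l" and "length P1 = length P2"
    unfolding transfer_adjacent_def by auto
  then show "transfer_adjacent (c # P1) (c # P2)"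
    unfolding transfer_adjacent_def
    by (intro conjI exI[of _ "Suc i"] exI[of _ "Suc j"] exI[of _ k]) (auto simp: nth_Cons')
qed

lemma transfer_adjacent_replicate_append:
  "transfer_adjacent (replicate p c @ P1) (replicate p c @ P2) \<longleftrightarrow> transfer_adjacent P1 P2"
  by (induction p) (simp_all add: transfer_adjacent_Cons)

lemma rook_adj_pad: "rook_adj (pad m B1) (pad m B2) \<longleftrightarrow> rook_adj B1 B2"
proof -
  let ?M = "max (length B1) (length B2)"
  let ?m = "max m ?M"
  have "pad ?m B = replicate (?m - ?M) 0 @ pad ?M B" if "length B \<le> ?M" for B
    using that by (simp add: pad_def replicate_add[symmetric])
  moreover have "max (length (pad m B1)) (length (pad m B2)) = ?m" by (simp add: length_pad)
  ultimately show ?thesis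
    unfolding rook_adj_iff_transfer_adjacent pad_pad
    by (simp add: transfer_adjacent_replicate_append max.commute)
qed

lemma rook_adj_canon:
  assumes "length u = length v"
  shows "rook_adj (canon u) (canon v) \<longleftrightarrow> rook_adj u v"
proof -
  have "pad (length u) (canon u) = u" "pad (length u) (canon v) = v"
    using pad_length_canon[of u] pad_length_canon[of v] assms by simp_all
  then show ?thesis using rook_adj_pad[of "length u" "canon u" "canon v"] by simp
qed

lemma not_rook_adj_self: "\<not> rook_adj B B"
  unfolding rook_adj_def Let_def by auto

lemma rook_adj_lowered_staircase:
  assumes "a < n" "b < n"
  shows "rook_adj (lowered_staircase n a) (lowered_staircase n b) \<longleftrightarrow> a \<noteq> b"
proof
  assume "a \<noteq> b"
  then show "rook_adj (lowered_staircase n a) (lowered_staircase n b)"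
    unfolding rook_adj_iff_transfer_adjacent transfer_adjacent_def
    using assms
    by (intro conjI exI[of _ "Suc b"] exI[of _ "Suc a"] exI[of _ 1])
      (auto simp: pad_def nth_lowered_staircase)
qed (use not_rook_adj_self in blast)

lemma rook_graph_iso_complete_if_enumerated:
  assumes vertices: "rook_graph_vertices B = g ` {..<n}"
    and adj: "\<And>a b. a < n \<Longrightarrow> b < n \<Longrightarrow> rook_adj (g a) (g b) \<longleftrightarrow> a \<noteq> b"
  shows "rook_graph_iso_complete B n"
proof -
  have inj: "inj_on g {..<n}"
    using adj not_rook_adj_self by (metis inj_onI lessThan_iff)
  let ?f = "the_inv_into {..<n} g"
  have "bij_betw ?f (rook_graph_vertices B) {..<n}"
    unfolding vertices using inj by (rule bij_betw_the_inv_into[OF inj_on_imp_bij_betw])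
  moreover have "rook_adj u v \<longleftrightarrow> ?f u \<noteq> ?f v"
    if "u \<in> rook_graph_vertices B" "v \<in> rook_graph_vertices B" for u v
    using that adj the_inv_into_f_f[OF inj] unfolding vertices by auto
  ultimately show ?thesis unfolding rook_graph_iso_complete_def by blast
qed

theorem theorem11:
  fixes n :: nat
  assumes "n > 0"
  shows "rook_graph_iso_complete ([0..<n] @ [n - 1]) n"
proof -
  have "rook_adj (canon (lowered_staircase n a)) (canon (lowered_staircase n b)) \<longleftrightarrow> a \<noteq> b"
    if "a < n" "b < n" for a b
    using that by (simp add: rook_adj_canon rook_adj_lowered_staircase)
  then show ?thesis
    using rook_graph_iso_complete_if_enumerated rook_graph_vertices_lowered_staircase[OF assms]
    unfolding lowered_staircase_last[OF assms] by blast
qed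

end
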